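(* Let $\Gamma$ be a one-dimensional CW-complex and $n\ge1$. Two oriented edges $(e_1,S_1)$ and $(e_2,S_2)$ of $UC_n(\Gamma)$ are dual to the same oriented hyperplane if and only if $e_1=e_2$ and $S_1 \setminus \{ o(e_1)\}$, $S_2 \setminus \{ o(e_2) \}$ belong to the same connected component of $UC_{n-1}(\Gamma \setminus e_1)$.
   Context: $UC_n(\Gamma)$ is the cube complex whose vertices are the $n$-element subsets of the vertex set $\Gamma^{(0)}$, whose edges join $S_1,S_2$ when $S_1\triangle S_2$ is a pair of adjacent vertices, and where $n$ edges at a common vertex span an $n$-cube when the one-cells of $\Gamma$ labelling them are pairwise disjoint (no common endpoint). An oriented edge of $UC_n(\Gamma)$ is determined by a pair $(e,S)$ with $e$ an oriented edge of $\Gamma$ and $S$ an $n$-subset of vertices with $o(e)\in S$, $t(e)\notin S$; it goes from $S$ to $(S\setminus\{o(e)\})\cup\{t(e)\}$. Oriented hyperplanes are equivalence classes of oriented edges under the relation generated by being parallel (and identically oriented) opposite sides of a square. $\Gamma\setminus e$ denotes the subgraph of $\Gamma$ obtained by removing the (closed) edge $e$, i.e. its endpoints and all edges incident to them. *)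

theory Defs
  imports Main
begin

text \<open>A one-dimensional CW-complex (graph, loops and multiple edges allowed) is given by
a vertex set V, a set E of one-cells, and an endpoint map ep :: 'e => 'v * 'v.
An oriented edge of Gamma is a pair (e, b): b = True means orientation from fst (ep e)
to snd (ep e), b = False the reverse.\<close>

definition graph :: "'v set \<Rightarrow> 'e set \<Rightarrow> ('e \<Rightarrow> 'v \<times> 'v) \<Rightarrow> bool" where
  "graph V E ep \<longleftrightarrow> (\<forall>e\<in>E. fst (ep e) \<in> V \<and> snd (ep e) \<in> V)"

definition orig :: "('e \<Rightarrow> 'v \<times> 'v) \<Rightarrow> 'e \<times> bool \<Rightarrow> 'v" where
  "orig ep x = (if snd x then fst (ep (fst x)) else snd (ep (fst x)))"

definition tgt :: "('e \<Rightarrow> 'v \<times> 'v) \<Rightarrow> 'e \<times> bool \<Rightarrow> 'v" where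
  "tgt ep x = (if snd x then snd (ep (fst x)) else fst (ep (fst x)))"

definition ends :: "('e \<Rightarrow> 'v \<times> 'v) \<Rightarrow> 'e \<Rightarrow> 'v set" where
  "ends ep e = {fst (ep e), snd (ep e)}"

text \<open>Gamma minus the closed edge e.\<close>
definition delV :: "'v set \<Rightarrow> ('e \<Rightarrow> 'v \<times> 'v) \<Rightarrow> 'e \<Rightarrow> 'v set" where
  "delV V ep e = V - ends ep e"

definition delE :: "'e set \<Rightarrow> ('e \<Rightarrow> 'v \<times> 'v) \<Rightarrow> 'e \<Rightarrow> 'e set" where
  "delE E ep e = {f \<in> E. ends ep f \<inter> ends ep e = {}}"

definition UC_vert :: "'v set \<Rightarrow> nat \<Rightarrow> 'v set \<Rightarrow> bool" where
  "UC_vert V n S \<longleftrightarrow> S \<subseteq> V \<and> finite S \<and> card S = n"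

definition UC_edge :: "'v set \<Rightarrow> 'e set \<Rightarrow> ('e \<Rightarrow> 'v \<times> 'v) \<Rightarrow> nat \<Rightarrow> ('e \<times> bool) \<times> 'v set \<Rightarrow> bool" where
  "UC_edge V E ep n xS \<longleftrightarrow> fst (fst xS) \<in> E \<and> UC_vert V n (snd xS)
      \<and> orig ep (fst xS) \<in> snd xS \<and> tgt ep (fst xS) \<notin> snd xS"

definition move :: "('e \<Rightarrow> 'v \<times> 'v) \<Rightarrow> 'e \<times> bool \<Rightarrow> 'v set \<Rightarrow> 'v set" where
  "move ep x S = insert (tgt ep x) (S - {orig ep x})"

text \<open>(x, S) and (x, S') are identically oriented opposite sides of a square:
the square at corner S spanned by the edges (x,S) and (phi,S) with disjoint labelling cells.\<close>
definition parallel :: "'v set \<Rightarrow> 'e set \<Rightarrow> ('e \<Rightarrow> 'v \<times> 'v) \<Rightarrow> nat \<Rightarrow>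
    ('e \<times> bool) \<times> 'v set \<Rightarrow> ('e \<times> bool) \<times> 'v set \<Rightarrow> bool" where
  "parallel V E ep n a b \<longleftrightarrow> UC_edge V E ep n a \<and> fst a = fst b \<and>
     (\<exists>phi. UC_edge V E ep n (phi, snd a) \<and> ends ep (fst phi) \<inter> ends ep (fst (fst a)) = {}
            \<and> snd b = move ep phi (snd a))"

definition same_hyp :: "'v set \<Rightarrow> 'e set \<Rightarrow> ('e \<Rightarrow> 'v \<times> 'v) \<Rightarrow> nat \<Rightarrow>
    ('e \<times> bool) \<times> 'v set \<Rightarrow> ('e \<times> bool) \<times> 'v set \<Rightarrow> bool" where
  "same_hyp V E ep n = equivclp (parallel V E ep n)"

definition UC_adj :: "'v set \<Rightarrow> 'e set \<Rightarrow> ('e \<Rightarrow> 'v \<times> 'v) \<Rightarrow> nat \<Rightarrow> 'v set \<Rightarrow> 'v set \<Rightarrow> bool" where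
  "UC_adj V E ep n S T \<longleftrightarrow> (\<exists>phi. UC_edge V E ep n (phi, S) \<and> T = move ep phi S)"

definition same_comp :: "'v set \<Rightarrow> 'e set \<Rightarrow> ('e \<Rightarrow> 'v \<times> 'v) \<Rightarrow> nat \<Rightarrow> 'v set \<Rightarrow> 'v set \<Rightarrow> bool" where
  "same_comp V E ep n S T \<longleftrightarrow> UC_vert V n S \<and> UC_vert V n T \<and> (UC_adj V E ep n)\<^sup>*\<^sup>* S T"

end

theory Submission
  imports Defs
begin

text \<open>Removing the origin identifies the oriented edges (x, S) of UC_n(Gamma) labelled
by x with the vertices S - {o(x)} of UC_(n-1)(Gamma - e), where e is the cell of x. The other
side of a square at such an edge is labelled by a cell disjoint from e, that is, by an edge of
Gamma - e; so under this identification the squares joining two edges labelled x are exactly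
the edges of UC_(n-1)(Gamma - e), and the classes generated by squares are the connected
components.\<close>

abbreviation UC_vert_minus :: "'v set \<Rightarrow> ('e \<Rightarrow> 'v \<times> 'v) \<Rightarrow> 'e \<Rightarrow> nat \<Rightarrow> 'v set \<Rightarrow> bool" where
  "UC_vert_minus V ep e m \<equiv> UC_vert (delV V ep e) m"

abbreviation UC_adj_minus ::
    "'v set \<Rightarrow> 'e set \<Rightarrow> ('e \<Rightarrow> 'v \<times> 'v) \<Rightarrow> 'e \<Rightarrow> nat \<Rightarrow> 'v set \<Rightarrow> 'v set \<Rightarrow> bool" where
  "UC_adj_minus V E ep e m \<equiv> UC_adj (delV V ep e) (delE E ep e) ep m"

lemma rtranclp_transfer_iff:
  assumes step: "\<And>a b. P a \<Longrightarrow> R (f a) b \<longleftrightarrow> (\<exists>a'. b = f a' \<and> Q a a')"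
    and closed: "\<And>a a'. P a \<Longrightarrow> Q a a' \<Longrightarrow> P a'"
    and "P a"
  shows "R\<^sup>*\<^sup>* (f a) b \<longleftrightarrow> (\<exists>a'. b = f a' \<and> P a' \<and> Q\<^sup>*\<^sup>* a a')"
proof
  show "R\<^sup>*\<^sup>* (f a) b \<Longrightarrow> \<exists>a'. b = f a' \<and> P a' \<and> Q\<^sup>*\<^sup>* a a'"
  proof (induction rule: rtranclp_induct)
    case base
    then show ?case using \<open>P a\<close> by blast
  next
    case (step b c)
    then obtain a' where "b = f a'" "P a'" "Q\<^sup>*\<^sup>* a a'" by blast
    moreover obtain a'' where "c = f a''" "Q a' a''"
      using step.hyps(2) \<open>b = f a'\<close> \<open>P a'\<close> by (metis assms(1))
    ultimately show ?case using closed by (blast intro: rtranclp.rtrancl_into_rtrancl)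
  qed
next
  have "R\<^sup>*\<^sup>* (f a) (f a') \<and> P a'" if "Q\<^sup>*\<^sup>* a a'" for a'
    using that
  proof (induction rule: rtranclp_induct)
    case base
    then show ?case using \<open>P a\<close> by simp
  next
    case (step a' a'')
    then have "R (f a') (f a'')" using assms(1) by blast
    then show ?case using step closed by (meson rtranclp.rtrancl_into_rtrancl)
  qed
  then show "\<exists>a'. b = f a' \<and> P a' \<and> Q\<^sup>*\<^sup>* a a' \<Longrightarrow> R\<^sup>*\<^sup>* (f a) b" by blast
qed

lemma ends_orig_tgt: "ends ep (fst x) = {orig ep x, tgt ep x}"
  by (auto simp: ends_def orig_def tgt_def)

lemma graph_delete: "graph V E ep \<Longrightarrow> graph (delV V ep e) (delE E ep e) ep"
  by (auto simp: graph_def delV_def delE_def ends_def)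

lemma UC_edge_endpoints_in:
  "graph V E ep \<Longrightarrow> UC_edge V E ep n (x, S) \<Longrightarrow> orig ep x \<in> V \<and> tgt ep x \<in> V"
  by (auto simp: UC_edge_def graph_def orig_def tgt_def)

lemma UC_vert_move:
  assumes "graph V E ep" "UC_edge V E ep n (phi, S)"
  shows "UC_vert V n (move ep phi S)"
proof -
  have "card S > 0"
    using assms(2) card_gt_0_iff by (force simp: UC_edge_def UC_vert_def)
  then show ?thesis
    using assms UC_edge_endpoints_in[OF assms]
    by (auto simp: UC_edge_def UC_vert_def move_def card_insert_if)
qed

lemma UC_adj_vert: "graph V E ep \<Longrightarrow> UC_adj V E ep n S T \<Longrightarrow> UC_vert V n T"
  using UC_vert_move unfolding UC_adj_def by blast

lemma UC_adj_sym:
  assumes "graph V E ep" "UC_adj V E ep n S T"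
  shows "UC_adj V E ep n T S"
proof -
  obtain phi where phi: "UC_edge V E ep n (phi, S)" "T = move ep phi S"
    using assms(2) by (auto simp: UC_adj_def)
  define psi where "psi = (fst phi, \<not> snd phi)"
  have "orig ep psi = tgt ep phi" "tgt ep psi = orig ep phi" "fst psi = fst phi"
    by (auto simp: psi_def orig_def tgt_def)
  then have "UC_edge V E ep n (psi, T) \<and> S = move ep psi T"
    using phi UC_vert_move[OF assms(1) phi(1)] by (auto simp: UC_edge_def move_def)
  then show ?thesis unfolding UC_adj_def by blast
qed

lemma UC_edge_iff_UC_vert_minus:
  assumes "graph V E ep" "n \<ge> 1"
  shows "UC_edge V E ep n (x, S) \<longleftrightarrow> fst x \<in> E \<and> orig ep x \<noteq> tgt ep x \<and> orig ep x \<in> S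
    \<and> UC_vert_minus V ep (fst x) (n - 1) (S - {orig ep x})" (is "_ \<longleftrightarrow> ?rhs")
proof
  show "UC_edge V E ep n (x, S) \<Longrightarrow> ?rhs"
    by (auto simp: UC_edge_def UC_vert_def delV_def ends_orig_tgt)
next
  assume ?rhs
  moreover have "orig ep x \<in> V" if "fst x \<in> E"
    using assms(1) that by (auto simp: graph_def orig_def)
  moreover have "card S > 0" if "finite S" "orig ep x \<in> S"
    using that card_gt_0_iff by blast
  ultimately show "UC_edge V E ep n (x, S)"
    using assms by (auto simp: UC_edge_def UC_vert_def delV_def ends_orig_tgt card_Suc_Diff1)
qed

lemma orig_notin_UC_vert_minus: "UC_vert_minus V ep (fst x) m T \<Longrightarrow> orig ep x \<notin> T"
  by (auto simp: UC_vert_def delV_def ends_orig_tgt)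

lemma square_side_iff_UC_edge_minus:
  assumes "graph V E ep" "n \<ge> 1" "fst x \<in> E" "orig ep x \<noteq> tgt ep x"
    and T: "UC_vert_minus V ep (fst x) (n - 1) T"
  shows "UC_edge V E ep n (phi, insert (orig ep x) T) \<and> ends ep (fst phi) \<inter> ends ep (fst x) = {}
    \<longleftrightarrow> UC_edge (delV V ep (fst x)) (delE E ep (fst x)) ep (n - 1) (phi, T)"
proof -
  have "orig ep x \<in> V"
    using assms(1,3) by (auto simp: graph_def orig_def)
  then have "UC_vert V n (insert (orig ep x) T)"
    using assms(2) T orig_notin_UC_vert_minus[OF T] by (auto simp: UC_vert_def delV_def)
  then show ?thesis
    using T by (auto simp: UC_edge_def delE_def ends_orig_tgt)
qed

lemma parallel_insert_orig_iff:
  assumes "graph V E ep" "n \<ge> 1" "fst x \<in> E" "orig ep x \<noteq> tgt ep x"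
    and T: "UC_vert_minus V ep (fst x) (n - 1) T"
  shows "parallel V E ep n (x, insert (orig ep x) T) b \<longleftrightarrow>
    (\<exists>T'. b = (x, insert (orig ep x) T') \<and> UC_adj_minus V E ep (fst x) (n - 1) T T')"
proof -
  have edge: "UC_edge V E ep n (x, insert (orig ep x) T)"
    using UC_edge_iff_UC_vert_minus[OF assms(1,2)] assms orig_notin_UC_vert_minus[OF T] by simp
  have move_insert: "move ep phi (insert (orig ep x) T) = insert (orig ep x) (move ep phi T)"
    if "ends ep (fst phi) \<inter> ends ep (fst x) = {}" for phi
    using that by (auto simp: move_def ends_orig_tgt)
  have "parallel V E ep n (x, insert (orig ep x) T) b \<longleftrightarrow> fst b = x \<and>
      (\<exists>phi. UC_edge (delV V ep (fst x)) (delE E ep (fst x)) ep (n - 1) (phi, T)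
        \<and> snd b = insert (orig ep x) (move ep phi T))" (is "?par \<longleftrightarrow> _ \<and> (\<exists>phi. ?side phi)")
  proof
    assume ?par
    then obtain phi where "fst b = x" "UC_edge V E ep n (phi, insert (orig ep x) T)"
      "ends ep (fst phi) \<inter> ends ep (fst x) = {}" "snd b = move ep phi (insert (orig ep x) T)"
      unfolding parallel_def by auto
    then show "fst b = x \<and> (\<exists>phi. ?side phi)"
      using square_side_iff_UC_edge_minus[OF assms] move_insert by blast
  next
    assume "fst b = x \<and> (\<exists>phi. ?side phi)"
    then obtain phi where b: "fst b = x" and side: "?side phi" by blast
    then have sq: "UC_edge V E ep n (phi, insert (orig ep x) T)"
      "ends ep (fst phi) \<inter> ends ep (fst x) = {}"
      using square_side_iff_UC_edge_minus[OF assms] by blast+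
    have "snd b = move ep phi (insert (orig ep x) T)"
      using side move_insert[OF sq(2)] by simp
    then show ?par
      using edge b sq unfolding parallel_def fst_conv snd_conv by blast
  qed
  then show ?thesis
    unfolding UC_adj_def by (cases b) auto
qed

lemma symclp_parallel_insert_orig_iff:
  assumes "graph V E ep" "n \<ge> 1" "fst x \<in> E" "orig ep x \<noteq> tgt ep x"
    and T: "UC_vert_minus V ep (fst x) (n - 1) T"
  shows "symclp (parallel V E ep n) (x, insert (orig ep x) T) b \<longleftrightarrow>
    (\<exists>T'. b = (x, insert (orig ep x) T') \<and> UC_adj_minus V E ep (fst x) (n - 1) T T')"
proof -
  note adj_vert = UC_adj_vert[OF graph_delete[OF assms(1)]]
  note adj_sym = UC_adj_sym[OF graph_delete[OF assms(1)]]
  have "parallel V E ep n b (x, insert (orig ep x) T) \<longleftrightarrow>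
    (\<exists>T'. b = (x, insert (orig ep x) T') \<and> UC_adj_minus V E ep (fst x) (n - 1) T T')"
  proof
    assume par: "parallel V E ep n b (x, insert (orig ep x) T)"
    obtain S' where b: "b = (x, S')" and "UC_edge V E ep n (x, S')"
      using par by (cases b) (auto simp: parallel_def)
    then have S': "S' = insert (orig ep x) (S' - {orig ep x})"
      and T': "UC_vert_minus V ep (fst x) (n - 1) (S' - {orig ep x})"
      using UC_edge_iff_UC_vert_minus[OF assms(1,2)] by auto
    have "parallel V E ep n (x, insert (orig ep x) (S' - {orig ep x})) (x, insert (orig ep x) T)"
      using par b S' by simp
    then obtain T'' where "insert (orig ep x) T = insert (orig ep x) T''"
      and adj: "UC_adj_minus V E ep (fst x) (n - 1) (S' - {orig ep x}) T''"
      unfolding parallel_insert_orig_iff[OF assms(1-4) T'] by blast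
    moreover have "orig ep x \<notin> T" "orig ep x \<notin> T''"
      using orig_notin_UC_vert_minus T adj_vert[OF adj] by blast+
    ultimately have "T'' = T" by (simp add: insert_ident)
    then show "\<exists>T'. b = (x, insert (orig ep x) T') \<and> UC_adj_minus V E ep (fst x) (n - 1) T T'"
      using b S' adj_sym[OF adj] by blast
  next
    assume "\<exists>T'. b = (x, insert (orig ep x) T') \<and> UC_adj_minus V E ep (fst x) (n - 1) T T'"
    then obtain T' where b: "b = (x, insert (orig ep x) T')"
      and adj: "UC_adj_minus V E ep (fst x) (n - 1) T T'" by blast
    show "parallel V E ep n b (x, insert (orig ep x) T)"
      unfolding b parallel_insert_orig_iff[OF assms(1-4) adj_vert[OF adj]]
      using adj_sym[OF adj] by blast
  qed
  then show ?thesis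
    unfolding symclp_def parallel_insert_orig_iff[OF assms] by blast
qed

lemma same_hyp_insert_orig_iff:
  assumes "graph V E ep" "n \<ge> 1" "fst x \<in> E" "orig ep x \<noteq> tgt ep x"
    and T: "UC_vert_minus V ep (fst x) (n - 1) T"
  shows "same_hyp V E ep n (x, insert (orig ep x) T) b \<longleftrightarrow>
    (\<exists>T'. b = (x, insert (orig ep x) T') \<and> UC_vert_minus V ep (fst x) (n - 1) T'
      \<and> (UC_adj_minus V E ep (fst x) (n - 1))\<^sup>*\<^sup>* T T')"
  unfolding same_hyp_def equivclp_def
  by (rule rtranclp_transfer_iff[where f = "\<lambda>T. (x, insert (orig ep x) T)"])
    (erule symclp_parallel_insert_orig_iff[OF assms(1-4)],
      erule UC_adj_vert[OF graph_delete[OF assms(1)]], rule T)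

lemma ex_insert_eq_iff:
  assumes "\<And>T. P T \<Longrightarrow> a \<notin> T"
  shows "(\<exists>T. S = insert a T \<and> P T) \<longleftrightarrow> a \<in> S \<and> P (S - {a})"
proof
  assume "\<exists>T. S = insert a T \<and> P T"
  then show "a \<in> S \<and> P (S - {a})" using assms by fastforce
next
  assume "a \<in> S \<and> P (S - {a})"
  then show "\<exists>T. S = insert a T \<and> P T" by (intro exI[of _ "S - {a}"]) auto
qed

theorem lemma3p6:
  fixes V :: "'v set" and E :: "'e set" and ep :: "'e \<Rightarrow> 'v \<times> 'v" and n :: nat
    and x1 x2 :: "'e \<times> bool" and S1 S2 :: "'v set"
  assumes "graph V E ep" and "n \<ge> 1"
    and "UC_edge V E ep n (x1, S1)" and "UC_edge V E ep n (x2, S2)"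
  shows "same_hyp V E ep n (x1, S1) (x2, S2) \<longleftrightarrow>
           x1 = x2 \<and> same_comp (delV V ep (fst x1)) (delE E ep (fst x1)) ep (n - 1)
                        (S1 - {orig ep x1}) (S2 - {orig ep x2})"
proof -
  let ?o = "orig ep x1" and ?vert = "UC_vert_minus V ep (fst x1) (n - 1)"
    and ?adj = "UC_adj_minus V E ep (fst x1) (n - 1)"
  have x1: "fst x1 \<in> E" "?o \<noteq> tgt ep x1"
    and S1: "insert ?o (S1 - {?o}) = S1" "?vert (S1 - {?o})"
    using assms(3) UC_edge_iff_UC_vert_minus[OF assms(1,2)] by auto
  have "same_hyp V E ep n (x1, S1) (x2, S2) \<longleftrightarrow>
      (\<exists>T. (x2, S2) = (x1, insert ?o T) \<and> ?vert T \<and> ?adj\<^sup>*\<^sup>* (S1 - {?o}) T)"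
    using same_hyp_insert_orig_iff[OF assms(1,2) x1 S1(2)] unfolding S1(1) .
  also have "\<dots> \<longleftrightarrow>
      x2 = x1 \<and> (\<exists>T. S2 = insert ?o T \<and> ?vert T \<and> ?adj\<^sup>*\<^sup>* (S1 - {?o}) T)"
    by blast
  also have "\<dots> \<longleftrightarrow>
      x2 = x1 \<and> ?o \<in> S2 \<and> ?vert (S2 - {?o}) \<and> ?adj\<^sup>*\<^sup>* (S1 - {?o}) (S2 - {?o})"
    by (subst ex_insert_eq_iff) (auto dest: orig_notin_UC_vert_minus)
  also have "\<dots> \<longleftrightarrow> x1 = x2 \<and> same_comp (delV V ep (fst x1)) (delE E ep (fst x1)) ep (n - 1)
                        (S1 - {?o}) (S2 - {orig ep x2})"
    using S1(2) assms(4) UC_edge_iff_UC_vert_minus[OF assms(1,2)] by (auto simp: same_comp_def)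
  finally show ?thesis .
qed

end
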